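(* Suppose Assumptions 1 and 2 hold. Then the modified dual function $g^m(\lambda)=\sum_{i=1}^N g_i^m(\lambda)$, where $g_i^m(\lambda)=\mathcal{L}^r_i(\hat{x}_i(\lambda),\lambda)$, is continuously differentiable and concave on all of $\mathbb{R}$.
   Context: For $i=1,\dots,N$: $d_i\in\mathbb{R}$, $\mathcal{X}_i=[\underline{x}_i,\bar{x}_i]$ a nonempty closed interval, $f_i,\phi_i:\mathbb{R}\to\mathbb{R}$. Assumption 1: for each $i$, $f_i$ and $\phi_i$ are continuously differentiable, $f_i$ is strictly convex on $\mathcal{X}_i$, $\phi_i$ is convex on $\mathcal{X}_i$, and $\phi_i'(x_i)<1$ for all $x_i\in\mathcal{X}_i$. Assumption 2: $f_i'(x_i)>0$ for all $x_i\in\mathcal{X}_i$ and all $i$. Local Lagrangian: $\mathcal{L}^r_i(x_i,\lambda)=f_i(x_i)+\lambda\big(d_i-x_i+\phi_i(x_i)\big)$. Let $v_i(x_i)=f_i'(x_i)(1-\phi_i'(x_i))^{-1}$ on $\mathcal{X}_i$ (strictly increasing under the assumptions). Define for $\lambda\in\mathbb{R}$: $\hat{x}_i(\lambda)=\underline{x}_i$ if $\lambda\le v_i(\underline{x}_i)$; $\hat{x}_i(\lambda)=v_i^{-1}(\lambda)$ if $v_i(\underline{x}_i)<\lambda<v_i(\bar{x}_i)$; $\hat{x}_i(\lambda)=\bar{x}_i$ if $\lambda\ge v_i(\bar{x}_i)$. *)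

theory Defs
  imports "HOL-Analysis.Analysis"
begin

definition strict_convex_on :: "real set \<Rightarrow> (real \<Rightarrow> real) \<Rightarrow> bool" where
  "strict_convex_on S f \<longleftrightarrow>
     (\<forall>x\<in>S. \<forall>y\<in>S. \<forall>u::real. x \<noteq> y \<and> 0 < u \<and> u < 1 \<longrightarrow>
        f (u * x + (1 - u) * y) < u * f x + (1 - u) * f y)"

definition vfun :: "(real \<Rightarrow> real) \<Rightarrow> (real \<Rightarrow> real) \<Rightarrow> real \<Rightarrow> real" where
  "vfun f \<phi> x = deriv f x / (1 - deriv \<phi> x)"

definition xhat :: "(real \<Rightarrow> real) \<Rightarrow> (real \<Rightarrow> real) \<Rightarrow> real \<Rightarrow> real \<Rightarrow> real \<Rightarrow> real" where
  "xhat f \<phi> xl xu lam =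
     (if lam \<le> vfun f \<phi> xl then xl
      else if lam \<ge> vfun f \<phi> xu then xu
      else (THE x. x \<in> {xl..xu} \<and> vfun f \<phi> x = lam))"

definition local_lagr :: "(real \<Rightarrow> real) \<Rightarrow> (real \<Rightarrow> real) \<Rightarrow> real \<Rightarrow> real \<Rightarrow> real \<Rightarrow> real" where
  "local_lagr f \<phi> d x lam = f x + lam * (d - x + \<phi> x)"

definition gm :: "nat \<Rightarrow> (nat \<Rightarrow> real \<Rightarrow> real) \<Rightarrow> (nat \<Rightarrow> real \<Rightarrow> real) \<Rightarrow> (nat \<Rightarrow> real)
                   \<Rightarrow> (nat \<Rightarrow> real) \<Rightarrow> (nat \<Rightarrow> real) \<Rightarrow> real \<Rightarrow> real" where
  "gm N f \<phi> d xl xu lam =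
     (\<Sum>i\<in>{1..N}. local_lagr (f i) (\<phi> i) (d i) (xhat (f i) (\<phi> i) (xl i) (xu i) lam) lam)"

end

theory Submission
  imports Defs
begin

text \<open>
  In \<open>x\<close>, the local Lagrangian \<open>L\<^sub>i(x, \<lambda>)\<close> has derivative \<open>(1 - \<phi>\<^sub>i'(x)) (v\<^sub>i(x) - \<lambda>)\<close>, and
  \<open>v\<^sub>i\<close> is strictly increasing on \<open>X\<^sub>i\<close> because \<open>f\<^sub>i'\<close> is positive and strictly increasing
  while \<open>\<phi>\<^sub>i'\<close> is increasing and below 1. So \<open>L\<^sub>i(\<cdot>, \<lambda>)\<close> decreases up to \<open>xhat\<^sub>i(\<lambda>)\<close> and
  increases after it, i.e. \<open>xhat\<^sub>i(\<lambda>)\<close> minimises it over \<open>X\<^sub>i\<close>; and \<open>xhat\<^sub>i\<close>, being the inverse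
  of \<open>v\<^sub>i\<close> composed with a clamp of \<open>\<lambda>\<close> to \<open>v\<^sub>i(X\<^sub>i)\<close>, is continuous. Hence \<open>g\<^sub>i\<^sup>m\<close> is a
  pointwise minimum of functions affine in \<open>\<lambda>\<close>, so concave, and by the envelope theorem its
  derivative is the continuous function \<open>d\<^sub>i - xhat\<^sub>i(\<lambda>) + \<phi>\<^sub>i(xhat\<^sub>i(\<lambda>))\<close>.
\<close>

lemma convex_on_secant_bounds:
  fixes g :: "real \<Rightarrow> real"
  assumes convex: "convex_on {a..b} g" and xy: "a \<le> x" "x < y" "y \<le> b"
    and deriv_x: "(g has_real_derivative Dx) (at x)"
    and deriv_y: "(g has_real_derivative Dy) (at y)"
  shows "Dx \<le> (g y - g x) / (y - x)" and "(g y - g x) / (y - x) \<le> Dy"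
proof -
  have convex_xy: "convex_on {x..y} g"
    by (rule convex_on_subset[OF convex]) (use xy in auto)
  have "((\<lambda>t. (g t - g x) / (t - x)) \<longlongrightarrow> Dx) (at_right x)"
    using deriv_x by (auto simp: has_field_derivative_iff intro: tendsto_mono at_le)
  moreover have "eventually (\<lambda>t. (g t - g x) / (t - x) \<le> (g y - g x) / (y - x)) (at_right x)"
    using eventually_at_right_real[OF xy(2)]
  proof eventually_elim
    case (elim t)
    then have "g t \<le> (g y - g x) / (y - x) * (t - x) + g x"
      using convex_onD_Icc'[OF convex_xy, of t] by auto
    with elim show ?case by (simp add: divide_le_eq)
  qed
  ultimately show "Dx \<le> (g y - g x) / (y - x)"
    by (intro tendsto_upperbound) auto
  have "((\<lambda>t. (g t - g y) / (t - y)) \<longlongrightarrow> Dy) (at_left y)"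
    using deriv_y by (auto simp: has_field_derivative_iff intro: tendsto_mono at_le)
  moreover have "eventually (\<lambda>t. (g y - g x) / (y - x) \<le> (g t - g y) / (t - y)) (at_left y)"
    using eventually_at_left_real[OF xy(2)]
  proof eventually_elim
    case (elim t)
    then have "g t \<le> (g x - g y) / (y - x) * (y - t) + g y"
      using convex_onD_Icc''[OF convex_xy, of t] by auto
    with elim show ?case by (simp add: neg_le_divide_eq) (simp add: field_simps)
  qed
  ultimately show "(g y - g x) / (y - x) \<le> Dy"
    by (intro tendsto_lowerbound) auto
qed

lemma convex_on_deriv_mono:
  fixes g :: "real \<Rightarrow> real"
  assumes "convex_on {a..b} g" and "\<And>x. x \<in> {a..b} \<Longrightarrow> (g has_real_derivative g' x) (at x)"
  shows "mono_on {a..b} g'"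
proof (rule mono_onI)
  fix x y assume x: "x \<in> {a..b}" and y: "y \<in> {a..b}" and "x \<le> y"
  show "g' x \<le> g' y"
  proof (cases "x = y")
    case False
    with \<open>x \<le> y\<close> have "x < y" by simp
    then show ?thesis
      using convex_on_secant_bounds[OF assms(1) _ \<open>x < y\<close>, of "g' x" "g' y"] x y assms(2) by force
  qed simp
qed

lemma strict_convex_onD:
  assumes "strict_convex_on S g" "x \<in> S" "y \<in> S" "x \<noteq> y" "0 < u" "u < 1"
  shows "g (u * x + (1 - u) * y) < u * g x + (1 - u) * g y"
  using assms unfolding strict_convex_on_def by blast

lemma strict_convex_on_imp_convex_on:
  assumes "strict_convex_on S g" and "convex S"
  shows "convex_on S g"
proof (rule convex_on_linorderI)
  fix t x y :: real assume "0 < t" "t < 1" "x \<in> S" "y \<in> S" "x < y"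
  then have "g ((1 - t) * x + (1 - (1 - t)) * y) < (1 - t) * g x + (1 - (1 - t)) * g y"
    by (intro strict_convex_onD[OF assms(1)]) auto
  then show "g ((1 - t) *\<^sub>R x + t *\<^sub>R y) \<le> (1 - t) * g x + t * g y" by simp
qed (fact assms(2))

lemma strict_convex_on_deriv_strict_mono:
  fixes g :: "real \<Rightarrow> real"
  assumes strict: "strict_convex_on {a..b} g"
    and deriv: "\<And>x. x \<in> {a..b} \<Longrightarrow> (g has_real_derivative g' x) (at x)"
  shows "strict_mono_on {a..b} g'"
proof (rule strict_mono_onI)
  fix x y assume x: "x \<in> {a..b}" and y: "y \<in> {a..b}" and "x < y"
  define m where "m = (x + y) / 2"
  have m: "x < m" "m < y" "m - x = y - m" using \<open>x < y\<close> by (simp_all add: m_def field_simps)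
  have convex: "convex_on {a..b} g"
    by (rule strict_convex_on_imp_convex_on[OF strict]) simp
  have "g' x \<le> (g m - g x) / (m - x)"
    using convex_on_secant_bounds(1)[OF convex _ m(1) _ deriv deriv] x y m by auto
  also have "\<dots> < (g y - g m) / (y - m)"
  proof -
    have "g ((1/2) * x + (1 - 1/2) * y) < (1/2) * g x + (1 - 1/2) * g y"
      using strict_convex_onD[OF strict x y _, of "1/2"] \<open>x < y\<close> by simp
    then have "g m - g x < g y - g m" by (simp add: m_def field_simps)
    then have "(g m - g x) / (m - x) < (g y - g m) / (m - x)"
      using m(1) by (intro divide_strict_right_mono) auto
    then show ?thesis by (simp only: m(3))
  qed
  also have "\<dots> \<le> g' y"
    using convex_on_secant_bounds(2)[OF convex _ m(2) _ deriv deriv] x y m by auto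
  finally show "g' x < g' y" .
qed

lemma envelope_concave:
  fixes g c :: "'x \<Rightarrow> real" and X :: "real \<Rightarrow> 'x"
  assumes X_in: "\<And>l. X l \<in> K"
    and X_min: "\<And>l x. x \<in> K \<Longrightarrow> g (X l) + l * c (X l) \<le> g x + l * c x"
  shows "concave_on UNIV (\<lambda>l. g (X l) + l * c (X l))"
  unfolding concave_on_iff
proof (intro conjI ballI allI impI)
  fix l m u w :: real assume uw: "0 \<le> u" "0 \<le> w" "u + w = 1"
  define z where "z = u * l + w * m"
  have "u * (g (X l) + l * c (X l)) + w * (g (X m) + m * c (X m))
      \<le> u * (g (X z) + l * c (X z)) + w * (g (X z) + m * c (X z))"
    by (rule add_mono[OF mult_left_mono mult_left_mono]) (use uw X_min[OF X_in] in auto)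
  also have "\<dots> = (u + w) * g (X z) + (u * l + w * m) * c (X z)"
    by (simp add: algebra_simps)
  also have "\<dots> = g (X z) + z * c (X z)"
    using uw(3) by (simp add: z_def)
  finally show "u * (g (X l) + l * c (X l)) + w * (g (X m) + m * c (X m))
      \<le> g (X (u *\<^sub>R l + w *\<^sub>R m)) + (u *\<^sub>R l + w *\<^sub>R m) * c (X (u *\<^sub>R l + w *\<^sub>R m))"
    by (simp add: z_def)
qed simp

lemma envelope_has_real_derivative:
  fixes g c :: "'x \<Rightarrow> real" and X :: "real \<Rightarrow> 'x"
  assumes X_in: "\<And>l. X l \<in> K"
    and X_min: "\<And>l x. x \<in> K \<Longrightarrow> g (X l) + l * c (X l) \<le> g x + l * c x"
    and cont: "isCont (\<lambda>l. c (X l)) l"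
  shows "((\<lambda>l. g (X l) + l * c (X l)) has_real_derivative c (X l)) (at l)"
proof -
  define G where "G m = g (X m) + m * c (X m)" for m
  define h where "h m = c (X m)" for m
  have bounds: "min (h m) (h l) \<le> (G m - G l) / (m - l) \<and> (G m - G l) / (m - l) \<le> max (h m) (h l)"
    if "m \<noteq> l" for m
  proof -
    have upper: "G m - G l \<le> (m - l) * h l"
      using X_min[OF X_in, of m l] by (simp add: G_def h_def algebra_simps)
    have lower: "(m - l) * h m \<le> G m - G l"
      using X_min[OF X_in, of l m] by (simp add: G_def h_def algebra_simps)
    show ?thesis
    proof (cases "l < m")
      case True
      with upper lower have "h m \<le> (G m - G l) / (m - l)" "(G m - G l) / (m - l) \<le> h l"
        by (simp_all add: le_divide_eq divide_le_eq mult.commute)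
      then show ?thesis by linarith
    next
      case False
      with \<open>m \<noteq> l\<close> have "m - l < 0" by simp
      with upper lower have "h l \<le> (G m - G l) / (m - l)" "(G m - G l) / (m - l) \<le> h m"
        by (simp_all add: neg_le_divide_eq neg_divide_le_eq mult.commute)
      then show ?thesis by linarith
    qed
  qed
  have "(h \<longlongrightarrow> h l) (at l)"
    using cont by (simp add: h_def[abs_def] isCont_def)
  then have lim_min: "((\<lambda>m. min (h m) (h l)) \<longlongrightarrow> h l) (at l)"
    and lim_max: "((\<lambda>m. max (h m) (h l)) \<longlongrightarrow> h l) (at l)"
    using tendsto_min[OF _ tendsto_const, of h "h l" _ "h l"] tendsto_max[OF _ tendsto_const, of h "h l" _ "h l"]
    by simp_all
  have near: "eventually (\<lambda>m. m \<noteq> l) (at l)"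
    by (simp add: eventually_at_filter)
  have "((\<lambda>m. (G m - G l) / (m - l)) \<longlongrightarrow> h l) (at l)"
  proof (rule tendsto_sandwich[OF _ _ lim_min lim_max])
    show "eventually (\<lambda>m. min (h m) (h l) \<le> (G m - G l) / (m - l)) (at l)"
      using near by eventually_elim (simp add: bounds)
    show "eventually (\<lambda>m. (G m - G l) / (m - l) \<le> max (h m) (h l)) (at l)"
      using near by eventually_elim (simp add: bounds)
  qed
  then show ?thesis
    by (simp add: has_field_derivative_iff G_def h_def)
qed

lemma C1_differentiable_on_UNIV_deriv:
  fixes g :: "real \<Rightarrow> real"
  assumes "g C1_differentiable_on UNIV"
  shows "(g has_real_derivative deriv g x) (at x)" and "continuous_on UNIV (deriv g)"
proof -
  obtain D where D: "\<And>x. (g has_real_derivative D x) (at x)" and "continuous_on UNIV D"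
    using assms by (auto simp: C1_differentiable_on_def has_real_derivative_iff_has_vector_derivative)
  moreover from D have "deriv g = D"
    by (intro ext DERIV_imp_deriv)
  ultimately show "(g has_real_derivative deriv g x) (at x)" and "continuous_on UNIV (deriv g)"
    by simp_all
qed

locale dual_component =
  fixes f \<phi> :: "real \<Rightarrow> real" and a b :: real
  assumes a_le_b: "a \<le> b"
    and f_deriv: "\<And>x. x \<in> {a..b} \<Longrightarrow> (f has_real_derivative deriv f x) (at x)"
    and \<phi>_deriv: "\<And>x. x \<in> {a..b} \<Longrightarrow> (\<phi> has_real_derivative deriv \<phi> x) (at x)"
    and continuous_deriv_f: "continuous_on {a..b} (deriv f)"
    and continuous_deriv_\<phi>: "continuous_on {a..b} (deriv \<phi>)"
    and f_strict_convex: "strict_convex_on {a..b} f"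
    and \<phi>_convex: "convex_on {a..b} \<phi>"
    and deriv_\<phi>_less_1: "\<And>x. x \<in> {a..b} \<Longrightarrow> deriv \<phi> x < 1"
    and deriv_f_pos: "\<And>x. x \<in> {a..b} \<Longrightarrow> 0 < deriv f x"
begin

abbreviation v :: "real \<Rightarrow> real" where "v \<equiv> vfun f \<phi>"

abbreviation xh :: "real \<Rightarrow> real" where "xh \<equiv> xhat f \<phi> a b"

lemma v_strict_mono: "strict_mono_on {a..b} v"
proof (rule strict_mono_onI)
  fix x y assume x: "x \<in> {a..b}" and y: "y \<in> {a..b}" and "x < y"
  have "strict_mono_on {a..b} (deriv f)"
    using f_strict_convex f_deriv by (rule strict_convex_on_deriv_strict_mono)
  then have f'_less: "deriv f x < deriv f y"
    using x y \<open>x < y\<close> by (rule strict_mono_onD)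
  have "mono_on {a..b} (deriv \<phi>)"
    using \<phi>_convex \<phi>_deriv by (rule convex_on_deriv_mono)
  then have \<phi>'_le: "deriv \<phi> x \<le> deriv \<phi> y"
    using x y \<open>x < y\<close> by (simp add: mono_onD)
  have "deriv f x / (1 - deriv \<phi> x) \<le> deriv f x / (1 - deriv \<phi> y)"
    using \<phi>'_le deriv_f_pos[OF x] deriv_\<phi>_less_1[OF y] by (intro divide_left_mono) auto
  also have "\<dots> < deriv f y / (1 - deriv \<phi> y)"
    using f'_less deriv_\<phi>_less_1[OF y] by (intro divide_strict_right_mono) auto
  finally show "v x < v y"
    by (simp add: vfun_def)
qed

lemma inj_on_v: "inj_on v {a..b}"
  by (rule strict_mono_on_imp_inj_on[OF v_strict_mono])

lemma v_a_le_v_b: "v a \<le> v b"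
  using strict_mono_on_leD[OF v_strict_mono] a_le_b by simp

lemma continuous_on_v: "continuous_on {a..b} v"
  unfolding vfun_def[abs_def] using deriv_\<phi>_less_1
  by (intro continuous_intros continuous_deriv_f continuous_deriv_\<phi>) force

lemma v_image: "v ` {a..b} = {v a..v b}"
proof
  show "v ` {a..b} \<subseteq> {v a..v b}"
    using strict_mono_on_leD[OF v_strict_mono] a_le_b by auto
  show "{v a..v b} \<subseteq> v ` {a..b}"
    using IVT'[of v a _ b] continuous_on_v a_le_b by fastforce
qed

lemma xhat_eq_the_inv_into: "xh l = the_inv_into {a..b} v (max (v a) (min (v b) l))"
proof -
  consider "l \<le> v a" | "v b \<le> l" "\<not> l \<le> v a" | "v a < l" "l < v b"
    using v_a_le_v_b by linarith
  then show ?thesis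
  proof cases
    case 1
    then show ?thesis
      using v_a_le_v_b a_le_b the_inv_into_f_f[OF inj_on_v, of a] by (simp add: xhat_def)
  next
    case 2
    then show ?thesis
      using v_a_le_v_b a_le_b the_inv_into_f_f[OF inj_on_v, of b] by (simp add: xhat_def)
  next
    case 3
    then show ?thesis
      by (simp add: xhat_def the_inv_into_def)
  qed
qed

lemma xhat_mem: "xh l \<in> {a..b}"
  and v_xhat: "v (xh l) = max (v a) (min (v b) l)"
proof -
  have clamp: "max (v a) (min (v b) l) \<in> v ` {a..b}"
    using v_image v_a_le_v_b by auto
  show "xh l \<in> {a..b}"
    unfolding xhat_eq_the_inv_into by (rule the_inv_into_into[OF inj_on_v clamp order_refl])
  show "v (xh l) = max (v a) (min (v b) l)"
    unfolding xhat_eq_the_inv_into by (rule f_the_inv_into_f[OF inj_on_v clamp])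
qed

lemma continuous_on_xhat: "continuous_on UNIV xh"
proof -
  have "continuous_on (v ` {a..b}) (the_inv_into {a..b} v)"
    by (intro continuous_on_inv_into continuous_on_v compact_Icc inj_on_v)
  then have "continuous_on UNIV (\<lambda>l. the_inv_into {a..b} v (max (v a) (min (v b) l)))"
    by (rule continuous_on_compose2) (use v_image v_a_le_v_b in \<open>auto intro!: continuous_intros\<close>)
  then show ?thesis
    by (simp add: xhat_eq_the_inv_into[abs_def])
qed

lemma v_xhat_le: "a < xh l \<Longrightarrow> v (xh l) \<le> l"
  and v_xhat_ge: "xh l < b \<Longrightarrow> l \<le> v (xh l)"
proof -
  have "a < xh l \<Longrightarrow> v a < v (xh l)" "xh l < b \<Longrightarrow> v (xh l) < v b"
    using strict_mono_onD[OF v_strict_mono] xhat_mem a_le_b by auto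
  then show "a < xh l \<Longrightarrow> v (xh l) \<le> l" "xh l < b \<Longrightarrow> l \<le> v (xh l)"
    using v_xhat[of l] v_a_le_v_b by linarith+
qed

lemma local_lagr_has_real_derivative:
  assumes "x \<in> {a..b}"
  shows "((\<lambda>x. local_lagr f \<phi> d x l) has_real_derivative (1 - deriv \<phi> x) * (v x - l)) (at x)"
proof -
  have "((\<lambda>x. f x + l * (d - x + \<phi> x)) has_real_derivative deriv f x + l * (0 - 1 + deriv \<phi> x)) (at x)"
    by (intro DERIV_add DERIV_cmult DERIV_diff DERIV_const DERIV_ident f_deriv \<phi>_deriv assms)
  moreover have "deriv f x + l * (0 - 1 + deriv \<phi> x) = (1 - deriv \<phi> x) * (v x - l)"
    using deriv_\<phi>_less_1[OF assms] by (simp add: vfun_def field_simps)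
  ultimately show ?thesis
    by (simp add: local_lagr_def[abs_def])
qed

lemma xhat_minimal:
  assumes x: "x \<in> {a..b}"
  shows "local_lagr f \<phi> d (xh l) l \<le> local_lagr f \<phi> d x l"
proof -
  let ?L = "\<lambda>x. local_lagr f \<phi> d x l"
  have cont: "continuous_on {a..b} ?L"
    by (rule continuous_at_imp_continuous_on) (use DERIV_isCont[OF local_lagr_has_real_derivative] in blast)
  have sign: "0 \<le> (1 - deriv \<phi> t) * (v t - l) \<longleftrightarrow> l \<le> v t" if "t \<in> {a..b}" for t
    using deriv_\<phi>_less_1[OF that] by (simp add: zero_le_mult_iff)
  consider "xh l < x" | "xh l = x" | "x < xh l"
    by linarith
  then show ?thesis
  proof cases
    case 1
    show ?thesis
    proof (rule DERIV_nonneg_imp_increasing_open[where f = ?L])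
      fix t assume "xh l < t" "t < x"
      with x xhat_mem[of l] have t: "t \<in> {a..b}" by auto
      have "l \<le> v (xh l)"
        using 1 x by (intro v_xhat_ge) auto
      also have "\<dots> < v t"
        using strict_mono_onD[OF v_strict_mono xhat_mem t \<open>xh l < t\<close>] .
      finally show "\<exists>y. (?L has_real_derivative y) (at t) \<and> 0 \<le> y"
        using local_lagr_has_real_derivative[OF t, of d l] sign[OF t] by auto
    qed (use 1 x xhat_mem[of l] in \<open>auto intro!: continuous_on_subset[OF cont]\<close>)
  next
    case 3
    show ?thesis
    proof (rule DERIV_nonpos_imp_decreasing_open[where f = ?L])
      fix t assume "x < t" "t < xh l"
      with x xhat_mem[of l] have t: "t \<in> {a..b}" by auto
      have "v t < v (xh l)"
        using strict_mono_onD[OF v_strict_mono t xhat_mem \<open>t < xh l\<close>] .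
      also have "\<dots> \<le> l"
        using 3 x by (intro v_xhat_le) auto
      finally show "\<exists>y. (?L has_real_derivative y) (at t) \<and> y \<le> 0"
        using local_lagr_has_real_derivative[OF t, of d l] sign[OF t] by auto
    qed (use 3 x xhat_mem[of l] in \<open>auto intro!: continuous_on_subset[OF cont]\<close>)
  qed simp
qed

lemma dual_component_eq:
  "(\<lambda>l. local_lagr f \<phi> d (xh l) l) = (\<lambda>l. f (xh l) + l * (d - xh l + \<phi> (xh l)))"
  by (simp add: local_lagr_def)

lemma dual_component_concave: "concave_on UNIV (\<lambda>l. local_lagr f \<phi> d (xh l) l)"
  unfolding dual_component_eq
  by (rule envelope_concave[where X = xh and c = "\<lambda>x. d - x + \<phi> x", OF xhat_mem])
    (use xhat_minimal in \<open>simp add: local_lagr_def\<close>)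

lemma dual_component_C1: "(\<lambda>l. local_lagr f \<phi> d (xh l) l) C1_differentiable_on UNIV"
proof -
  have "continuous_on {a..b} \<phi>"
    by (rule continuous_at_imp_continuous_on) (use DERIV_isCont[OF \<phi>_deriv] in blast)
  then have cont: "continuous_on UNIV (\<lambda>l. d - xh l + \<phi> (xh l))"
    by (intro continuous_intros continuous_on_xhat continuous_on_compose2[of "{a..b}" \<phi> UNIV xh])
      (auto intro: xhat_mem)
  have deriv: "((\<lambda>l. local_lagr f \<phi> d (xh l) l) has_real_derivative d - xh l + \<phi> (xh l)) (at l)" for l
    unfolding dual_component_eq
    by (rule envelope_has_real_derivative[where X = xh and c = "\<lambda>x. d - x + \<phi> x", OF xhat_mem])
      (use xhat_minimal cont in \<open>simp_all add: local_lagr_def continuous_on_eq_continuous_at\<close>)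
  show ?thesis
    unfolding C1_differentiable_on_def
    by (rule exI[of _ "\<lambda>l. d - xh l + \<phi> (xh l)"])
      (use deriv cont in \<open>simp add: has_real_derivative_iff_has_vector_derivative\<close>)
qed

end

lemma C1_differentiable_on_sum:
  assumes "finite I" and "\<And>i. i \<in> I \<Longrightarrow> g i C1_differentiable_on S"
  shows "(\<lambda>x. \<Sum>i\<in>I. g i x) C1_differentiable_on S"
  using assms by (induction I rule: finite_induct) auto

lemma concave_on_sum_functions:
  assumes "finite I" and "convex S" and "\<And>i. i \<in> I \<Longrightarrow> concave_on S (g i)"
  shows "concave_on S (\<lambda>x. \<Sum>i\<in>I. g i x)"
  using assms by (induction I rule: finite_induct) (auto simp: concave_on_const intro: concave_on_add)

theorem lemma3:
  fixes N :: nat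
    and f \<phi> :: "nat \<Rightarrow> real \<Rightarrow> real"
    and d xl xu :: "nat \<Rightarrow> real"
  assumes nonempty: "\<And>i. i \<in> {1..N} \<Longrightarrow> xl i \<le> xu i"
    and f_C1: "\<And>i. i \<in> {1..N} \<Longrightarrow> f i C1_differentiable_on UNIV"
    and phi_C1: "\<And>i. i \<in> {1..N} \<Longrightarrow> \<phi> i C1_differentiable_on UNIV"
    and f_strict_convex: "\<And>i. i \<in> {1..N} \<Longrightarrow> strict_convex_on {xl i..xu i} (f i)"
    and phi_convex: "\<And>i. i \<in> {1..N} \<Longrightarrow> convex_on {xl i..xu i} (\<phi> i)"
    and phi_deriv_lt1: "\<And>i x. i \<in> {1..N} \<Longrightarrow> x \<in> {xl i..xu i} \<Longrightarrow> deriv (\<phi> i) x < 1"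
    and f_deriv_pos: "\<And>i x. i \<in> {1..N} \<Longrightarrow> x \<in> {xl i..xu i} \<Longrightarrow> deriv (f i) x > 0"
  shows "gm N f \<phi> d xl xu C1_differentiable_on UNIV \<and> concave_on UNIV (gm N f \<phi> d xl xu)"
proof -
  have component: "dual_component (f i) (\<phi> i) (xl i) (xu i)" if i: "i \<in> {1..N}" for i
    using nonempty f_strict_convex phi_convex phi_deriv_lt1 f_deriv_pos
      C1_differentiable_on_UNIV_deriv[OF f_C1] C1_differentiable_on_UNIV_deriv[OF phi_C1] i
    by unfold_locales (auto intro: continuous_on_subset[OF _ subset_UNIV])
  have gm_eq: "gm N f \<phi> d xl xu = (\<lambda>l. \<Sum>i\<in>{1..N}. local_lagr (f i) (\<phi> i) (d i) (xhat (f i) (\<phi> i) (xl i) (xu i) l) l)"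
    by (simp add: fun_eq_iff gm_def)
  show ?thesis
    unfolding gm_eq using dual_component.dual_component_C1[OF component]
      dual_component.dual_component_concave[OF component]
    by (auto intro: C1_differentiable_on_sum concave_on_sum_functions)
qed

end
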